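(* Define $\rho:M\times M\to[1,\infty)$ by $$\rho\big((y,x),(y',x')\big)=1+|y-y'|+2\inf\Big\{t\ge0:\ \sum_{i=1}^de^{-2\lambda_i(t+\max(y,y'))}(x_i-x_i')^2\le1\Big\}.$$ Then there exists $C_\rho>0$ such that $\mathrm{dist}(p,q)\le\rho(p,q)\le\mathrm{dist}(p,q)+C_\rho$ for all $p,q\in M$.
   Context: Let $d\ge1$, $0<\lambda_1\le\cdots\le\lambda_d$, and $M$ be $\mathbb{R}^{d+1}$ with coordinates $(y,x)=(y,x_1,\dots,x_d)$ and metric $g=dy^2+\sum_{i=1}^d e^{-2\lambda_i y}dx_i^2$; $\mathrm{dist}$ is its Riemannian distance. *)

theory Defs
  imports "HOL-Analysis.Analysis"
begin

text \<open>Points of M = R^(d+1) are pairs (y, x) with y real and x in real^'n,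
  where the finite type 'n indexes the coordinates x_1..x_d (so d = CARD('n) >= 1).
  lam i is the exponent lambda_i.\<close>

definition speed :: "('n::finite \<Rightarrow> real) \<Rightarrow> (real \<times> (real^'n)) \<Rightarrow> (real \<times> (real^'n)) \<Rightarrow> real" where
  "speed lam p v = sqrt ((fst v)\<^sup>2 + (\<Sum>i\<in>UNIV. exp (-2 * lam i * fst p) * ((snd v) $ i)\<^sup>2))"

definition has_riem_length ::
  "('n::finite \<Rightarrow> real) \<Rightarrow> (real \<Rightarrow> (real \<times> (real^'n))) \<Rightarrow> real \<Rightarrow> bool" where
  "has_riem_length lam \<gamma> L \<longleftrightarrow>
     \<gamma> piecewise_C1_differentiable_on {0..1} \<and>
     ((\<lambda>t. speed lam (\<gamma> t) (vector_derivative \<gamma> (at t))) has_integral L) {0..1}"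

definition riem_dist :: "('n::finite \<Rightarrow> real) \<Rightarrow> (real \<times> (real^'n)) \<Rightarrow> (real \<times> (real^'n)) \<Rightarrow> real" where
  "riem_dist lam p q = Inf {L. \<exists>\<gamma>. \<gamma> 0 = p \<and> \<gamma> 1 = q \<and> has_riem_length lam \<gamma> L}"

definition rho :: "('n::finite \<Rightarrow> real) \<Rightarrow> (real \<times> (real^'n)) \<Rightarrow> (real \<times> (real^'n)) \<Rightarrow> real" where
  "rho lam p q = 1 + \<bar>fst p - fst q\<bar> + 2 * Inf {t. t \<ge> 0 \<and>
      (\<Sum>i\<in>UNIV. exp (-2 * lam i * (t + max (fst p) (fst q))) * ((snd p) $ i - (snd q) $ i)\<^sup>2) \<le> 1}"

end

theory Submission
  imports Defs
begin

text \<open>Projecting onto the coordinates (y, x_j) does not increase length, and the image plane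
  dy^2 + e^(-2 lambda_j y) dx_j^2 is hyperbolic, so a curve from p to q is at least as long as
  ln (cosh (lambda_j d_j)) / lambda_j, where d_j is the hyperbolic distance of the projections.
  Bounding cosh (lambda_j d_j) below by e^(lambda_j |y - y'|) / 2, or by
  lambda_j^2 (x_j - x_j')^2 e^(-lambda_j (y + y')) / 2 for the coordinate j that determines the
  infimum in rho, gives rho <= dist + C. Conversely, for every admissible t the curve that climbs
  to height t + max(y, y'), crosses horizontally and descends has length at most
  |y - y'| + 2 t + 1, whence dist <= rho.\<close>

section \<open>Lengths of curves\<close>

definition horizontal_sqlen :: "('n::finite \<Rightarrow> real) \<Rightarrow> real \<Rightarrow> real^'n \<Rightarrow> real^'n \<Rightarrow> real" where
  "horizontal_sqlen lam H x x' = (\<Sum>i\<in>UNIV. exp (-2 * lam i * H) * (x $ i - x' $ i)\<^sup>2)"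

lemma speed_nonneg: "0 \<le> speed lam p v"
  unfolding speed_def by (intro real_sqrt_ge_zero add_nonneg_nonneg sum_nonneg) auto

lemma speed_scaleR: "speed lam p (c *\<^sub>R v) = \<bar>c\<bar> * speed lam p v"
proof -
  have "(fst (c *\<^sub>R v))\<^sup>2 + (\<Sum>i\<in>UNIV. exp (-2 * lam i * fst p) * (snd (c *\<^sub>R v) $ i)\<^sup>2)
      = c\<^sup>2 * ((fst v)\<^sup>2 + (\<Sum>i\<in>UNIV. exp (-2 * lam i * fst p) * (snd v $ i)\<^sup>2))"
    by (simp add: power_mult_distrib sum_distrib_left algebra_simps)
  then show ?thesis unfolding speed_def by (simp add: real_sqrt_mult)
qed

lemma speed_ge_plane:
  "sqrt ((fst v)\<^sup>2 + exp (-2 * lam j * fst p) * (snd v $ j)\<^sup>2) \<le> speed lam p v"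
  unfolding speed_def
  by (intro real_sqrt_le_mono add_left_mono member_le_sum[where f = "\<lambda>i. exp (-2 * lam i * fst p) * (snd v $ i)\<^sup>2"]) auto

lemma has_riem_length_nonneg: "has_riem_length lam \<gamma> L \<Longrightarrow> 0 \<le> L"
  unfolding has_riem_length_def by (auto intro: has_integral_nonneg speed_nonneg)

lemma riem_dist_le_length:
  assumes "\<gamma> 0 = p" "\<gamma> 1 = q" "has_riem_length lam \<gamma> L"
  shows "riem_dist lam p q \<le> L"
  unfolding riem_dist_def using assms has_riem_length_nonneg
  by (intro cInf_lower bdd_belowI[where m = 0]) auto

lemma has_riem_length_linepath:
  assumes "\<And>t. speed lam (linepath a b t) (b - a) = L"
  shows "has_riem_length lam (linepath a b) L"
  unfolding has_riem_length_def
  using valid_path_linepath[of a b] has_integral_const_real[of L 0 1] assms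
  by (simp add: valid_path_def)

lemma has_riem_length_vertical:
  assumes "snd a = snd b"
  shows "has_riem_length lam (linepath a b) \<bar>fst b - fst a\<bar>"
  by (rule has_riem_length_linepath) (simp add: speed_def assms)

lemma has_riem_length_horizontal:
  assumes "fst a = fst b"
  shows "has_riem_length lam (linepath a b) (sqrt (horizontal_sqlen lam (fst a) (snd a) (snd b)))"
  by (rule has_riem_length_linepath)
    (simp add: speed_def horizontal_sqlen_def linepath_def algebra_simps power2_commute assms)

lemma vector_derivative_joinpaths_left:
  fixes g1 g2 :: "real \<Rightarrow> 'a::real_normed_vector"
  assumes "g1 differentiable at (2 * z)" "z < 1/2"
  shows "vector_derivative (g1 +++ g2) (at z) = 2 *\<^sub>R vector_derivative g1 (at (2 * z))"
proof (rule vector_derivative_at [OF has_vector_derivative_transform_within])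
  show "0 < \<bar>z - 1/2\<bar>"
    using assms by simp
  have "((*) 2 has_vector_derivative 2) (at z)"
    by (simp add: has_vector_derivative_def has_derivative_def bounded_linear_mult_left)
  moreover have "(g1 has_vector_derivative vector_derivative g1 (at (2 * z))) (at (2 * z))"
    using assms by (simp add: vector_derivative_works)
  ultimately show "((\<lambda>x. g1 (2 * x)) has_vector_derivative 2 *\<^sub>R vector_derivative g1 (at (2 * z))) (at z)"
    by (intro vector_diff_chain_at [simplified o_def])
qed (use assms in \<open>auto simp: joinpaths_def dist_real_def\<close>)

lemma vector_derivative_joinpaths_right:
  fixes g1 g2 :: "real \<Rightarrow> 'a::real_normed_vector"
  assumes "g2 differentiable at (2 * z - 1)" "1/2 < z"
  shows "vector_derivative (g1 +++ g2) (at z) = 2 *\<^sub>R vector_derivative g2 (at (2 * z - 1))"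
proof (rule vector_derivative_at [OF has_vector_derivative_transform_within])
  show "0 < \<bar>z - 1/2\<bar>"
    using assms by simp
  have "((\<lambda>x. 2 * x - 1) has_vector_derivative 2) (at z)"
    by (auto intro!: derivative_eq_intros)
  moreover have "(g2 has_vector_derivative vector_derivative g2 (at (2 * z - 1))) (at (2 * z - 1))"
    using assms by (simp add: vector_derivative_works)
  ultimately show "((\<lambda>x. g2 (2 * x - 1)) has_vector_derivative 2 *\<^sub>R vector_derivative g2 (at (2 * z - 1))) (at z)"
    by (intro vector_diff_chain_at [simplified o_def])
qed (use assms in \<open>auto simp: joinpaths_def dist_real_def\<close>)

lemma has_riem_length_join:
  assumes l1: "has_riem_length lam \<gamma>1 L1" and l2: "has_riem_length lam \<gamma>2 L2"
    and "\<gamma>1 1 = \<gamma>2 0"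
  shows "has_riem_length lam (\<gamma>1 +++ \<gamma>2) (L1 + L2)"
proof -
  define v where "v \<gamma> = (\<lambda>t. speed lam (\<gamma> t) (vector_derivative \<gamma> (at t)))" for \<gamma>
  obtain s1 s2 where s1: "finite s1" "\<forall>x\<in>{0..1} - s1. \<gamma>1 differentiable at x"
    and s2: "finite s2" "\<forall>x\<in>{0..1} - s2. \<gamma>2 differentiable at x"
    using l1 l2 by (auto simp: has_riem_length_def piecewise_C1_differentiable_on_def C1_differentiable_on_eq)
  have "(v \<gamma>1 has_integral L1) {0..1}" "(v \<gamma>2 has_integral L2) {0..1}"
    using l1 l2 by (simp_all add: has_riem_length_def v_def)
  from has_integral_affinity01 [OF this(1), where m = 2 and c = 0, THEN has_integral_cmul [where c = 2]]
       has_integral_affinity01 [OF this(2), where m = 2 and c = "-1", THEN has_integral_cmul [where c = 2]]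
  have i1: "((\<lambda>x. 2 * v \<gamma>1 (2 * x)) has_integral L1) {0..1/2}"
   and i2: "((\<lambda>x. 2 * v \<gamma>2 (2 * x - 1)) has_integral L2) {1/2..1}"
    by (simp_all only: image_affinity_atLeastAtMost_div_diff, simp_all add: mult_ac)
  have "((v (\<gamma>1 +++ \<gamma>2)) has_integral L1) {0..1/2}"
  proof (rule has_integral_spike_finite [OF _ _ i1])
    show "finite ({1/2} \<union> (\<lambda>x. x / 2) ` s1)" using s1 by simp
  next
    fix x assume x: "x \<in> {0..1/2} - ({1/2} \<union> (\<lambda>x. x / 2) ` s1)"
    then have "2 * x \<notin> s1"
      using image_eqI[of x "\<lambda>x. x / 2" "2 * x" s1] by auto
    with x s1 have "vector_derivative (\<gamma>1 +++ \<gamma>2) (at x) = 2 *\<^sub>R vector_derivative \<gamma>1 (at (2 * x))"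
      by (intro vector_derivative_joinpaths_left) auto
    moreover have "(\<gamma>1 +++ \<gamma>2) x = \<gamma>1 (2 * x)"
      using x by (simp add: joinpaths_def)
    ultimately show "v (\<gamma>1 +++ \<gamma>2) x = 2 * v \<gamma>1 (2 * x)"
      by (simp add: v_def speed_scaleR)
  qed
  moreover have "((v (\<gamma>1 +++ \<gamma>2)) has_integral L2) {1/2..1}"
  proof (rule has_integral_spike_finite [OF _ _ i2])
    show "finite ({1/2} \<union> (\<lambda>x. (x + 1) / 2) ` s2)" using s2 by simp
  next
    fix x assume x: "x \<in> {1/2..1} - ({1/2} \<union> (\<lambda>x. (x + 1) / 2) ` s2)"
    then have "2 * x - 1 \<notin> s2"
      using image_eqI[of x "\<lambda>x. (x + 1) / 2" "2 * x - 1" s2] by auto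
    with x s2 have "vector_derivative (\<gamma>1 +++ \<gamma>2) (at x) = 2 *\<^sub>R vector_derivative \<gamma>2 (at (2 * x - 1))"
      by (intro vector_derivative_joinpaths_right) auto
    moreover have "(\<gamma>1 +++ \<gamma>2) x = \<gamma>2 (2 * x - 1)"
      using x by (simp add: joinpaths_def)
    ultimately show "v (\<gamma>1 +++ \<gamma>2) x = 2 * v \<gamma>2 (2 * x - 1)"
      by (simp add: v_def speed_scaleR)
  qed
  ultimately have "((v (\<gamma>1 +++ \<gamma>2)) has_integral (L1 + L2)) {0..1}"
    by (intro has_integral_combine[of 0 "1/2" 1]) auto
  moreover have "valid_path (\<gamma>1 +++ \<gamma>2)"
    using l1 l2 assms(3) by (intro valid_path_join) (auto simp: has_riem_length_def valid_path_def pathstart_def pathfinish_def)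
  ultimately show ?thesis
    by (simp add: has_riem_length_def valid_path_def v_def)
qed

lemma has_riem_length_over_height:
  assumes "fst p \<le> H" "fst q \<le> H"
  obtains \<gamma> where "\<gamma> 0 = p" "\<gamma> 1 = q"
    and "has_riem_length lam \<gamma> (H - fst p + (sqrt (horizontal_sqlen lam H (snd p) (snd q)) + (H - fst q)))"
proof
  let ?\<gamma> = "linepath p (H, snd p) +++ linepath (H, snd p) (H, snd q) +++ linepath (H, snd q) q"
  show "?\<gamma> 0 = p" "?\<gamma> 1 = q"
    by (simp_all add: joinpaths_def linepath_0' linepath_1')
  have "has_riem_length lam (linepath p (H, snd p)) \<bar>H - fst p\<bar>"
    and "has_riem_length lam (linepath (H, snd p) (H, snd q)) (sqrt (horizontal_sqlen lam H (snd p) (snd q)))"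
    and "has_riem_length lam (linepath (H, snd q) q) \<bar>fst q - H\<bar>"
    using has_riem_length_vertical[of p "(H, snd p)"] has_riem_length_horizontal[of "(H, snd p)" "(H, snd q)"]
      has_riem_length_vertical[of "(H, snd q)" q]
    by simp_all
  then have "has_riem_length lam ?\<gamma> (\<bar>H - fst p\<bar> + (sqrt (horizontal_sqlen lam H (snd p) (snd q)) + \<bar>fst q - H\<bar>))"
    by (intro has_riem_length_join) (simp_all add: joinpaths_def linepath_0' linepath_1')
  then show "has_riem_length lam ?\<gamma> (H - fst p + (sqrt (horizontal_sqlen lam H (snd p) (snd q)) + (H - fst q)))"
    using assms by simp
qed

lemma riem_dist_le_over_height:
  assumes "fst p \<le> H" "fst q \<le> H"
  shows "riem_dist lam p q \<le> H - fst p + (sqrt (horizontal_sqlen lam H (snd p) (snd q)) + (H - fst q))"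
  using has_riem_length_over_height[OF assms] riem_dist_le_length by metis

section \<open>Projections to hyperbolic planes\<close>

lemma increment_le_integral:
  fixes f g :: "real \<Rightarrow> real"
  assumes "a \<le> b" "finite S" "continuous_on {a..b} f"
    and deriv: "\<And>x. x \<in> {a<..<b} - S \<Longrightarrow> \<exists>D. (f has_real_derivative D) (at x) \<and> D \<le> g x"
    and "(g has_integral I) {a..b}"
  shows "f b - f a \<le> I"
proof -
  define f' where "f' x = (if x \<in> {a<..<b} - S then SOME D. (f has_real_derivative D) (at x) \<and> D \<le> g x else g x)" for x
  have f': "(f has_real_derivative f' x) (at x) \<and> f' x \<le> g x" if "x \<in> {a<..<b} - S" for x
    using someI_ex[OF deriv[OF that]] that by (simp add: f'_def)
  have "(f' has_integral (f b - f a)) {a..b}"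
    using f' by (intro fundamental_theorem_of_calculus_interior_strong[OF assms(2,1) _ assms(3)])
      (simp add: has_real_derivative_iff_has_vector_derivative)
  then show ?thesis
    by (rule has_integral_le[OF _ assms(5)]) (use f' in \<open>auto simp: f'_def\<close>)
qed

lemma has_real_derivative_fst:
  fixes g :: "real \<Rightarrow> real \<times> 'b::real_normed_vector"
  assumes "(g has_vector_derivative v) (at s)"
  shows "((\<lambda>t. fst (g t)) has_real_derivative fst v) (at s)"
  using has_derivative_fst[OF assms[unfolded has_vector_derivative_def]]
  unfolding has_field_derivative_def by (rule has_derivative_eq_rhs) (auto simp: mult.commute)

lemma has_real_derivative_snd_nth:
  fixes g :: "real \<Rightarrow> 'a::real_normed_vector \<times> (real^'n)"
  assumes "(g has_vector_derivative v) (at s)"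
  shows "((\<lambda>t. snd (g t) $ j) has_real_derivative snd v $ j) (at s)"
  using bounded_linear.has_derivative[OF bounded_linear_vec_nth has_derivative_snd[OF assms[unfolded has_vector_derivative_def]]]
  unfolding has_field_derivative_def by (rule has_derivative_eq_rhs) (auto simp: mult.commute)

text \<open>Under u = e^(l y) / l the metric dy^2 + e^(-2 l y) dx^2 becomes (du^2 + dx^2) / (l u)^2,
  the hyperbolic upper half plane scaled by 1/l; hcosh l y0 x0 y x is cosh (l d) for the distance d
  between (y0, x0) and (y, x) there.\<close>
definition hcosh :: "real \<Rightarrow> real \<Rightarrow> real \<Rightarrow> real \<Rightarrow> real \<Rightarrow> real" where
  "hcosh l y0 x0 y x = cosh (l * (y - y0)) + l\<^sup>2 * (x - x0)\<^sup>2 / (2 * exp (l * (y + y0)))"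

lemma hcosh_ge_1: "1 \<le> hcosh l y0 x0 y x"
  unfolding hcosh_def using cosh_real_ge_1 by (simp add: add_increasing2)

lemma hcosh_pos: "0 < hcosh l y0 x0 y x"
  using hcosh_ge_1 less_le_trans zero_less_one by blast

lemma hcosh_same [simp]: "hcosh l y x y x = 1"
  by (simp add: hcosh_def)

lemma hcosh_ge_exp_abs: "exp (l * \<bar>y - y0\<bar>) / 2 \<le> hcosh l y0 x0 y x"
proof -
  have "exp (l * \<bar>y - y0\<bar>) \<le> exp \<bar>l * (y - y0)\<bar>"
    by (simp add: abs_mult mult_right_mono)
  also have "\<dots> \<le> exp (l * (y - y0)) + exp (- (l * (y - y0)))"
    by (cases "0 \<le> l * (y - y0)") (simp_all add: add_increasing add_increasing2)
  finally have "exp (l * \<bar>y - y0\<bar>) / 2 \<le> cosh (l * (y - y0))"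
    by (simp add: cosh_def)
  then show ?thesis unfolding hcosh_def by (simp add: add_increasing2)
qed

lemma hcosh_ge_horizontal: "l\<^sup>2 * (x - x0)\<^sup>2 / (2 * exp (l * (y + y0))) \<le> hcosh l y0 x0 y x"
  unfolding hcosh_def using cosh_real_pos[of "l * (y - y0)"] by linarith

lemma hcosh_has_derivative:
  assumes "(Y has_real_derivative a) (at s)" "(X has_real_derivative b) (at s)"
  shows "((\<lambda>t. hcosh l y0 x0 (Y t) (X t)) has_real_derivative
     (l * sinh (l * (Y s - y0)) - l * (l\<^sup>2 * (X s - x0)\<^sup>2 / (2 * exp (l * (Y s + y0))))) * a
     + l\<^sup>2 * (X s - x0) / exp (l * (Y s + y0)) * b) (at s)"
  unfolding hcosh_def
  by (rule derivative_eq_intros assms refl | simp)+ (simp add: field_simps power2_eq_square)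

lemma hcosh_gradient_identity:
  fixes l y0 x0 y x :: real
  defines "K \<equiv> l\<^sup>2 * (x - x0)\<^sup>2 / (2 * exp (l * (y + y0)))"
  shows "(l * sinh (l * (y - y0)) - l * K)\<^sup>2 + (l\<^sup>2 * (x - x0) / exp (l * (y + y0)))\<^sup>2 * exp (2 * l * y)
    = l\<^sup>2 * ((hcosh l y0 x0 y x)\<^sup>2 - 1)"
proof -
  let ?c = "cosh (l * (y - y0))" and ?s = "sinh (l * (y - y0))" and ?E = "exp (l * (y + y0))"
  have "exp (2 * l * y) = ?E * (?c + ?s)"
    by (simp add: cosh_plus_sinh exp_add[symmetric] algebra_simps)
  then have "(l\<^sup>2 * (x - x0) / ?E)\<^sup>2 * exp (2 * l * y) = 2 * l\<^sup>2 * K * (?c + ?s)"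
    by (simp add: K_def power2_eq_square field_simps)
  moreover have "?c\<^sup>2 = ?s\<^sup>2 + 1" by (rule cosh_square_eq)
  ultimately show ?thesis
    unfolding hcosh_def K_def[symmetric] by (simp add: power2_eq_square algebra_simps)
qed

lemma weighted_cauchy_schwarz2:
  fixes p q a b E :: real
  assumes "0 < E"
  shows "(p * a + q * b)\<^sup>2 \<le> (p\<^sup>2 + q\<^sup>2 / E) * (a\<^sup>2 + E * b\<^sup>2)"
proof -
  have "(p\<^sup>2 + q\<^sup>2 / E) * (a\<^sup>2 + E * b\<^sup>2) - (p * a + q * b)\<^sup>2 = (p * E * b - q * a)\<^sup>2 / E"
    using assms by (simp add: field_simps power2_eq_square)
  moreover have "0 \<le> (p * E * b - q * a)\<^sup>2 / E"
    using assms by simp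
  ultimately show ?thesis
    by linarith
qed

lemma ln_hcosh_has_derivative_le:
  assumes l: "0 < l" and Y: "(Y has_real_derivative a) (at s)" and X: "(X has_real_derivative b) (at s)"
  obtains D where "((\<lambda>t. ln (hcosh l y0 x0 (Y t) (X t)) / l) has_real_derivative D) (at s)"
    and "D \<le> sqrt (a\<^sup>2 + exp (-2 * l * Y s) * b\<^sup>2)"
proof
  let ?W = "hcosh l y0 x0 (Y s) (X s)" and ?E = "exp (-2 * l * Y s)"
  define K where "K = l\<^sup>2 * (X s - x0)\<^sup>2 / (2 * exp (l * (Y s + y0)))"
  define Wy where "Wy = l * sinh (l * (Y s - y0)) - l * K"
  define Wx where "Wx = l\<^sup>2 * (X s - x0) / exp (l * (Y s + y0))"
  have W: "1 \<le> ?W" by (rule hcosh_ge_1)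
  have "((\<lambda>t. hcosh l y0 x0 (Y t) (X t)) has_real_derivative Wy * a + Wx * b) (at s)"
    unfolding Wy_def Wx_def K_def by (rule hcosh_has_derivative[OF Y X])
  then show "((\<lambda>t. ln (hcosh l y0 x0 (Y t) (X t)) / l) has_real_derivative (Wy * a + Wx * b) / (?W * l)) (at s)"
    using W l by (auto intro!: derivative_eq_intros simp: field_simps)
  have "(Wy * a + Wx * b)\<^sup>2 \<le> (Wy\<^sup>2 + Wx\<^sup>2 / ?E) * (a\<^sup>2 + ?E * b\<^sup>2)"
    by (rule weighted_cauchy_schwarz2) simp
  also have "Wy\<^sup>2 + Wx\<^sup>2 / ?E = Wy\<^sup>2 + Wx\<^sup>2 * exp (2 * l * Y s)"
    by (simp add: divide_inverse exp_minus[symmetric])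
  also have "\<dots> = l\<^sup>2 * (?W\<^sup>2 - 1)"
    unfolding Wy_def Wx_def K_def by (rule hcosh_gradient_identity)
  also have "\<dots> * (a\<^sup>2 + ?E * b\<^sup>2) \<le> l\<^sup>2 * ?W\<^sup>2 * (a\<^sup>2 + ?E * b\<^sup>2)"
    by (intro mult_right_mono) (simp_all add: right_diff_distrib)
  also have "\<dots> = (l * ?W * sqrt (a\<^sup>2 + ?E * b\<^sup>2))\<^sup>2"
    by (simp add: power_mult_distrib)
  finally have "(Wy * a + Wx * b)\<^sup>2 \<le> (l * ?W * sqrt (a\<^sup>2 + ?E * b\<^sup>2))\<^sup>2" .
  moreover have "0 \<le> l * ?W * sqrt (a\<^sup>2 + ?E * b\<^sup>2)"
    using l W by simp
  ultimately have "Wy * a + Wx * b \<le> l * ?W * sqrt (a\<^sup>2 + ?E * b\<^sup>2)"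
    by (rule power2_le_imp_le)
  moreover have "0 < ?W * l"
    using l W by simp
  ultimately show "(Wy * a + Wx * b) / (?W * l) \<le> sqrt (a\<^sup>2 + ?E * b\<^sup>2)"
    by (simp add: pos_divide_le_eq mult_ac)
qed

lemma has_riem_length_ge_ln_hcosh:
  fixes lam :: "'n::finite \<Rightarrow> real"
  assumes l: "0 < lam j" and len: "has_riem_length lam \<gamma> L" and "\<gamma> 0 = p" "\<gamma> 1 = q"
  shows "ln (hcosh (lam j) (fst p) (snd p $ j) (fst q) (snd q $ j)) / lam j \<le> L"
proof -
  obtain S where S: "finite S" and cont: "continuous_on {0..1} \<gamma>" and "\<gamma> C1_differentiable_on {0..1} - S"
    and int: "((\<lambda>t. speed lam (\<gamma> t) (vector_derivative \<gamma> (at t))) has_integral L) {0..1}"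
    using len unfolding has_riem_length_def piecewise_C1_differentiable_on_def by blast
  then obtain D where D: "\<And>x. x \<in> {0..1} - S \<Longrightarrow> (\<gamma> has_vector_derivative D x) (at x)"
    unfolding C1_differentiable_on_def by blast
  define f where "f t = ln (hcosh (lam j) (fst p) (snd p $ j) (fst (\<gamma> t)) (snd (\<gamma> t) $ j)) / lam j" for t
  have "f 1 - f 0 \<le> L"
  proof (rule increment_le_integral[OF _ S _ _ int])
    have "continuous_on {0..1} (\<lambda>t. hcosh (lam j) (fst p) (snd p $ j) (fst (\<gamma> t)) (snd (\<gamma> t) $ j))"
      unfolding hcosh_def by (intro continuous_intros cont) auto
    then show "continuous_on {0..1} f"
      unfolding f_def[abs_def] using l
      by (intro continuous_intros) (auto simp: hcosh_pos[THEN less_imp_neq, symmetric])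
  next
    fix x assume "x \<in> {0<..<1} - S"
    then have dx: "(\<gamma> has_vector_derivative D x) (at x)"
      using D by auto
    obtain E where "(f has_real_derivative E) (at x)"
      and "E \<le> sqrt ((fst (D x))\<^sup>2 + exp (-2 * lam j * fst (\<gamma> x)) * (snd (D x) $ j)\<^sup>2)"
      unfolding f_def[abs_def]
      by (rule ln_hcosh_has_derivative_le[OF l has_real_derivative_fst[OF dx] has_real_derivative_snd_nth[OF dx]])
    moreover have "sqrt ((fst (D x))\<^sup>2 + exp (-2 * lam j * fst (\<gamma> x)) * (snd (D x) $ j)\<^sup>2)
        \<le> speed lam (\<gamma> x) (vector_derivative \<gamma> (at x))"
      unfolding vector_derivative_at[OF dx] by (rule speed_ge_plane)
    ultimately show "\<exists>E. (f has_real_derivative E) (at x) \<and> E \<le> speed lam (\<gamma> x) (vector_derivative \<gamma> (at x))"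
      by auto
  qed simp
  then show ?thesis
    by (simp add: f_def assms(3,4))
qed

lemma has_riem_length_ge_height_diff:
  fixes lam :: "'n::finite \<Rightarrow> real"
  assumes l: "0 < lam j" and "has_riem_length lam \<gamma> L" "\<gamma> 0 = p" "\<gamma> 1 = q"
  shows "\<bar>fst p - fst q\<bar> - ln 2 / lam j \<le> L"
proof -
  let ?W = "hcosh (lam j) (fst p) (snd p $ j) (fst q) (snd q $ j)"
  have "ln (exp (lam j * \<bar>fst q - fst p\<bar>) / 2) \<le> ln ?W"
    using hcosh_ge_exp_abs hcosh_pos by (subst ln_le_cancel_iff) auto
  then have "(lam j * \<bar>fst p - fst q\<bar> - ln 2) / lam j \<le> ln ?W / lam j"
    using l by (intro divide_right_mono) (simp_all add: ln_div abs_minus_commute)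
  also have "\<dots> \<le> L"
    by (rule has_riem_length_ge_ln_hcosh[OF assms])
  finally show ?thesis
    using l by (simp add: diff_divide_distrib)
qed

lemma has_riem_length_ge_horizontal_gap:
  fixes lam :: "'n::finite \<Rightarrow> real"
  assumes l: "0 < lam j" and "has_riem_length lam \<gamma> L" "\<gamma> 0 = p" "\<gamma> 1 = q"
    and gap: "snd p $ j \<noteq> snd q $ j"
  shows "ln ((lam j)\<^sup>2 * (snd p $ j - snd q $ j)\<^sup>2 / 2) / lam j - fst p - fst q \<le> L"
proof -
  let ?W = "hcosh (lam j) (fst p) (snd p $ j) (fst q) (snd q $ j)"
  let ?A = "(lam j)\<^sup>2 * (snd p $ j - snd q $ j)\<^sup>2 / 2"
  have A: "0 < ?A"
    using l gap by simp
  have "?A / exp (lam j * (fst q + fst p)) \<le> ?W"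
    using hcosh_ge_horizontal[of "lam j" "snd q $ j" "snd p $ j" "fst q" "fst p"]
    by (simp add: power2_commute)
  then have "ln (?A / exp (lam j * (fst q + fst p))) \<le> ln ?W"
    using A hcosh_pos by (subst ln_le_cancel_iff) auto
  moreover have "ln (?A / exp (lam j * (fst q + fst p))) = ln ?A - lam j * (fst p + fst q)"
    by (simp only: ln_divide_pos[OF A exp_gt_zero] ln_exp add.commute)
  ultimately have "(ln ?A - lam j * (fst p + fst q)) / lam j \<le> ln ?W / lam j"
    using l by (intro divide_right_mono) simp_all
  also have "\<dots> \<le> L"
    by (rule has_riem_length_ge_ln_hcosh[OF assms(1-4)])
  finally show ?thesis
    using l by (simp add: diff_divide_distrib)
qed

section \<open>Comparison with rho\<close>

definition crossing_times :: "('n::finite \<Rightarrow> real) \<Rightarrow> real \<times> (real^'n) \<Rightarrow> real \<times> (real^'n) \<Rightarrow> real set" where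
  "crossing_times lam p q =
     {t. 0 \<le> t \<and> horizontal_sqlen lam (t + max (fst p) (fst q)) (snd p) (snd q) \<le> 1}"

lemma rho_eq_Inf_crossing_times:
  "rho lam p q = 1 + \<bar>fst p - fst q\<bar> + 2 * Inf (crossing_times lam p q)"
  by (simp add: rho_def crossing_times_def horizontal_sqlen_def)

lemma crossing_times_bdd_below: "bdd_below (crossing_times lam p q)"
  by (rule bdd_belowI[where m = 0]) (simp add: crossing_times_def)

lemma has_riem_length_ge_binding_height:
  fixes lam :: "'n::finite \<Rightarrow> real"
  assumes l: "0 < lam j" and len: "has_riem_length lam \<gamma> L" "\<gamma> 0 = p" "\<gamma> 1 = q"
    and gap: "snd p $ j \<noteq> snd q $ j"
    and eq: "ln (real CARD('n) * (snd p $ j - snd q $ j)\<^sup>2) = 2 * lam j * (t + max (fst p) (fst q))"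
  shows "ln ((lam j)\<^sup>2 / (2 * real CARD('n))) / lam j + 2 * t + \<bar>fst p - fst q\<bar> \<le> L"
proof -
  let ?d = "real CARD('n)"
  have "(lam j)\<^sup>2 * (snd p $ j - snd q $ j)\<^sup>2 / 2 = (lam j)\<^sup>2 / (2 * ?d) * (?d * (snd p $ j - snd q $ j)\<^sup>2)"
    by simp
  also have "ln \<dots> = ln ((lam j)\<^sup>2 / (2 * ?d)) + ln (?d * (snd p $ j - snd q $ j)\<^sup>2)"
    using l gap by (intro ln_mult_pos) auto
  finally have "ln ((lam j)\<^sup>2 * (snd p $ j - snd q $ j)\<^sup>2 / 2)
      = ln ((lam j)\<^sup>2 / (2 * ?d)) + 2 * lam j * (t + max (fst p) (fst q))"
    by (simp only: eq)
  then show ?thesis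
    using has_riem_length_ge_horizontal_gap[OF l len gap] l
    by (simp add: add_divide_distrib max_def split: if_splits)
qed

text \<open>The witness is the least height at which every term of the sum is at most 1 / CARD('n).\<close>
lemma crossing_time_exists:
  fixes lam :: "'n::finite \<Rightarrow> real"
  assumes l: "\<And>i. 0 < lam i"
  obtains t where "t \<in> crossing_times lam p q"
    and "t = 0 \<or> (\<exists>j. snd p $ j \<noteq> snd q $ j \<and>
           ln (real CARD('n) * (snd p $ j - snd q $ j)\<^sup>2) = 2 * lam j * (t + max (fst p) (fst q)))"
proof -
  define d where "d = real CARD('n)"
  define M where "M = max (fst p) (fst q)"
  define \<Delta> where "\<Delta> i = snd p $ i - snd q $ i" for i
  define \<tau> where "\<tau> i = (if \<Delta> i = 0 then 0 else max 0 (ln (d * (\<Delta> i)\<^sup>2) / (2 * lam i) - M))" for i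
  define t where "t = Max (range \<tau>)"
  have d: "0 < d"
    by (simp add: d_def)
  have t_ge: "\<tau> i \<le> t" for i
    unfolding t_def by (rule Max_ge) auto
  have "t \<in> range \<tau>"
    unfolding t_def by (rule Max_in) auto
  then obtain j where tj: "t = \<tau> j"
    by blast
  have term_le: "exp (-2 * lam i * (t + M)) * (\<Delta> i)\<^sup>2 \<le> 1 / d" for i
  proof (cases "\<Delta> i = 0")
    case False
    with t_ge[of i] l[of i] have "ln (d * (\<Delta> i)\<^sup>2) \<le> 2 * lam i * (t + M)"
      by (simp add: \<tau>_def field_simps)
    then have "d * (\<Delta> i)\<^sup>2 \<le> exp (2 * lam i * (t + M))"
      using False d by (metis exp_le_cancel_iff exp_ln mult_pos_pos zero_less_power2)
    then have "(\<Delta> i)\<^sup>2 / exp (2 * lam i * (t + M)) \<le> 1 / d"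
      using d by (simp add: field_simps)
    moreover have "exp (-2 * lam i * (t + M)) = inverse (exp (2 * lam i * (t + M)))"
      by (simp add: exp_minus[symmetric])
    ultimately show ?thesis
      by (simp add: divide_inverse mult.commute)
  qed (use d in simp)
  have "horizontal_sqlen lam (t + M) (snd p) (snd q) \<le> real CARD('n) * (1 / d)"
    unfolding horizontal_sqlen_def \<Delta>_def[symmetric] by (rule sum_bounded_above) (rule term_le)
  moreover have "0 \<le> t"
    using t_ge[of j] by (simp add: tj \<tau>_def)
  ultimately have "t \<in> crossing_times lam p q"
    using d by (simp add: crossing_times_def M_def d_def)
  moreover have "t = 0 \<or> (\<Delta> j \<noteq> 0 \<and> ln (d * (\<Delta> j)\<^sup>2) = 2 * lam j * (t + M))"
    using l[of j] by (auto simp: tj \<tau>_def max_def field_simps)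
  ultimately show ?thesis
    using that unfolding \<Delta>_def d_def M_def by (metis right_minus_eq)
qed

definition rho_dist_const :: "('n::finite \<Rightarrow> real) \<Rightarrow> real" where
  "rho_dist_const lam = 1 + (\<Sum>j\<in>UNIV. (\<bar>ln ((lam j)\<^sup>2 / (2 * real CARD('n)))\<bar> + ln 2) / lam j)"

lemma rho_dist_const_ge:
  fixes lam :: "'n::finite \<Rightarrow> real"
  assumes "\<And>i. 0 < lam i"
  shows "1 + (\<bar>ln ((lam j)\<^sup>2 / (2 * real CARD('n)))\<bar> + ln 2) / lam j \<le> rho_dist_const lam"
  unfolding rho_dist_const_def using assms
  by (simp add: member_le_sum[where f = "\<lambda>j. (\<bar>ln ((lam j)\<^sup>2 / (2 * real CARD('n)))\<bar> + ln 2) / lam j"] less_imp_le)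

lemma rho_dist_const_pos:
  assumes "\<And>i. 0 < lam i"
  shows "0 < rho_dist_const lam"
  unfolding rho_dist_const_def using assms
  by (intro add_pos_nonneg sum_nonneg divide_nonneg_pos) auto

lemma rho_le_length_add_const:
  fixes lam :: "'n::finite \<Rightarrow> real"
  assumes l: "\<And>i. 0 < lam i" and len: "has_riem_length lam \<gamma> L" "\<gamma> 0 = p" "\<gamma> 1 = q"
  shows "rho lam p q \<le> L + rho_dist_const lam"
proof -
  let ?M = "max (fst p) (fst q)" and ?d = "real CARD('n)"
  obtain t where t: "t \<in> crossing_times lam p q"
    and cases: "t = 0 \<or> (\<exists>j. snd p $ j \<noteq> snd q $ j \<and>
           ln (?d * (snd p $ j - snd q $ j)\<^sup>2) = 2 * lam j * (t + ?M))"
    using crossing_time_exists[where lam = lam and p = p and q = q] l by blast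
  have "rho lam p q \<le> 1 + \<bar>fst p - fst q\<bar> + 2 * t"
    using cInf_lower[OF t crossing_times_bdd_below] by (simp add: rho_eq_Inf_crossing_times)
  moreover have "1 + \<bar>fst p - fst q\<bar> + 2 * t \<le> L + rho_dist_const lam"
    using cases
  proof
    assume "t = 0"
    fix j :: 'n
    have "\<bar>fst p - fst q\<bar> - ln 2 / lam j \<le> L"
      by (rule has_riem_length_ge_height_diff[OF l len])
    moreover have "ln 2 / lam j \<le> (\<bar>ln ((lam j)\<^sup>2 / (2 * ?d))\<bar> + ln 2) / lam j"
      using l[of j] by (intro divide_right_mono) auto
    ultimately show ?thesis
      using rho_dist_const_ge[where lam = lam and j = j, OF l] \<open>t = 0\<close> by linarith
  next
    assume "\<exists>j. snd p $ j \<noteq> snd q $ j \<and> ln (?d * (snd p $ j - snd q $ j)\<^sup>2) = 2 * lam j * (t + ?M)"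
    then obtain j where gap: "snd p $ j \<noteq> snd q $ j"
      and eq: "ln (?d * (snd p $ j - snd q $ j)\<^sup>2) = 2 * lam j * (t + ?M)"
      by blast
    have "ln ((lam j)\<^sup>2 / (2 * ?d)) / lam j + 2 * t + \<bar>fst p - fst q\<bar> \<le> L"
      by (rule has_riem_length_ge_binding_height[OF l[of j] len gap eq])
    moreover have "- ln ((lam j)\<^sup>2 / (2 * ?d)) / lam j \<le> (\<bar>ln ((lam j)\<^sup>2 / (2 * ?d))\<bar> + ln 2) / lam j"
      using l[of j] ln_ge_zero[of 2] by (intro divide_right_mono) linarith+
    ultimately show ?thesis
      using rho_dist_const_ge[where lam = lam and j = j, OF l] by linarith
  qed
  ultimately show ?thesis
    by linarith
qed

lemma rho_le_riem_dist_add_const: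
  fixes lam :: "'n::finite \<Rightarrow> real"
  assumes "\<And>i. 0 < lam i"
  shows "rho lam p q \<le> riem_dist lam p q + rho_dist_const lam"
proof -
  obtain \<gamma> L where "\<gamma> 0 = p" "\<gamma> 1 = q" "has_riem_length lam \<gamma> L"
    using has_riem_length_over_height[where H = "max (fst p) (fst q)"] by (metis max.cobounded1 max.cobounded2)
  then have "{L. \<exists>\<gamma>. \<gamma> 0 = p \<and> \<gamma> 1 = q \<and> has_riem_length lam \<gamma> L} \<noteq> {}"
    by blast
  then have "rho lam p q - rho_dist_const lam \<le> riem_dist lam p q"
    unfolding riem_dist_def
  proof (rule cInf_greatest)
    fix L assume "L \<in> {L. \<exists>\<gamma>. \<gamma> 0 = p \<and> \<gamma> 1 = q \<and> has_riem_length lam \<gamma> L}"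
    then obtain \<gamma> where "\<gamma> 0 = p" "\<gamma> 1 = q" "has_riem_length lam \<gamma> L"
      by blast
    then have "rho lam p q \<le> L + rho_dist_const lam"
      by (intro rho_le_length_add_const[where lam = lam, OF assms])
    then show "rho lam p q - rho_dist_const lam \<le> L"
      by linarith
  qed
  then show ?thesis
    by linarith
qed

lemma riem_dist_le_rho:
  fixes lam :: "'n::finite \<Rightarrow> real"
  assumes "\<And>i. 0 < lam i"
  shows "riem_dist lam p q \<le> rho lam p q"
proof -
  have "(riem_dist lam p q - 1 - \<bar>fst p - fst q\<bar>) / 2 \<le> t" if "t \<in> crossing_times lam p q" for t
  proof -
    let ?H = "t + max (fst p) (fst q)"
    have "riem_dist lam p q \<le> ?H - fst p + (sqrt (horizontal_sqlen lam ?H (snd p) (snd q)) + (?H - fst q))"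
      using that by (intro riem_dist_le_over_height) (auto simp: crossing_times_def)
    moreover have "sqrt (horizontal_sqlen lam ?H (snd p) (snd q)) \<le> 1"
      using that by (simp add: crossing_times_def)
    moreover have "2 * ?H - fst p - fst q = 2 * t + \<bar>fst p - fst q\<bar>"
      by (auto simp: max_def)
    ultimately have "riem_dist lam p q \<le> 1 + \<bar>fst p - fst q\<bar> + 2 * t"
      by linarith
    then show ?thesis
      by simp
  qed
  moreover obtain t0 where "t0 \<in> crossing_times lam p q"
    using crossing_time_exists[where lam = lam and p = p and q = q] assms by blast
  ultimately have "(riem_dist lam p q - 1 - \<bar>fst p - fst q\<bar>) / 2 \<le> Inf (crossing_times lam p q)"
    by (intro cInf_greatest) auto
  then show ?thesis
    by (simp add: rho_eq_Inf_crossing_times)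
qed

theorem mainTheorem8:
  fixes lam :: "'n::finite \<Rightarrow> real"
  assumes "\<And>i. lam i > 0"
  shows "\<exists>C>0. \<forall>p q. riem_dist lam p q \<le> rho lam p q \<and> rho lam p q \<le> riem_dist lam p q + C"
proof (intro exI conjI allI)
  show "0 < rho_dist_const lam"
    using rho_dist_const_pos assms by blast
  fix p q
  show "riem_dist lam p q \<le> rho lam p q"
    using riem_dist_le_rho assms by blast
  show "rho lam p q \<le> riem_dist lam p q + rho_dist_const lam"
    using rho_le_riem_dist_add_const assms by blast
qed

end
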